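(* Let $\Gamma$ be a compact topological group, $A$ a locally compact space, and $\mathcal I$ a weakly locally maximal $(\Gamma,A)$-groupoid. Then: (i) there exists a split $\Gamma$-space $(Y_{\mathcal I},\varpi,\phi)$ over $A$ with isotropy groupoid $\mathcal I$, and $Y_{\mathcal I}$ is locally compact; (ii) if $(X,\pi,\varphi)$ and $(X',\pi',\varphi')$ are two split $\Gamma$-spaces over $A$ with isotropy groupoid $\mathcal I$ and $X$, $X'$ are locally compact, then there is a unique $\Gamma$-equivariant homeomorphism $F\colon X\to X'$ with $\varphi'=F\circ\varphi$.
   Context: A space is locally compact if it is Hausdorff and every point has a compact neighbourhood. A split $\Gamma$-space over $A$ is a triple $(X,\pi,\varphi)$ where $X$ carries a continuous left $\Gamma$-action, $\pi\colon X\to A$ is a continuous surjection each of whose fibres is a single $\Gamma$-orbit, and $\varphi\colon A\to X$ is a continuous section of $\pi$. A $(\Gamma,A)$-groupoid is a subspace $\mathcal I\subset\Gamma\times A$ such that for every $a\in A$, $\mathcal I_a:=\mathcal I\cap(\Gamma\times\{a\})=\tilde{\mathcal I}_a\times\{a\}$ with $\tilde{\mathcal I}_a$ a closed subgroup of $\Gamma$. It is weakly locally maximal if every $a\in A$ has a neighbourhood $U$ such that $\tilde{\mathcal I}_u\subset\tilde{\mathcal I}_a$ for all $u\in U$. The isotropy groupoid of $(X,\pi,\varphi)$ is $\{(\gamma,a)\in\Gamma\times A:\gamma\in\Gamma_{\varphi(a)}\}$, where $\Gamma_x$ is the stabiliser of $x$. *)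

theory Defs
  imports "HOL-Analysis.Analysis" "HOL-Algebra.Group"
begin

definition loc_compact :: "'a topology \<Rightarrow> bool" where
  "loc_compact X \<longleftrightarrow> Hausdorff_space X \<and> locally_compact_space X"

definition topological_group :: "('g, 'b) monoid_scheme \<Rightarrow> 'g topology \<Rightarrow> bool" where
  "topological_group G T \<longleftrightarrow> group G \<and> topspace T = carrier G \<and>
     continuous_map (prod_topology T T) T (\<lambda>(g, h). g \<otimes>\<^bsub>G\<^esub> h) \<and>
     continuous_map T T (\<lambda>g. inv\<^bsub>G\<^esub> g)"

definition cont_action ::
  "('g, 'b) monoid_scheme \<Rightarrow> 'g topology \<Rightarrow> 'x topology \<Rightarrow> ('g \<Rightarrow> 'x \<Rightarrow> 'x) \<Rightarrow> bool" where
  "cont_action G T X act \<longleftrightarrow>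
     (\<forall>g\<in>carrier G. \<forall>x\<in>topspace X. act g x \<in> topspace X) \<and>
     (\<forall>x\<in>topspace X. act \<one>\<^bsub>G\<^esub> x = x) \<and>
     (\<forall>g\<in>carrier G. \<forall>h\<in>carrier G. \<forall>x\<in>topspace X.
        act (g \<otimes>\<^bsub>G\<^esub> h) x = act g (act h x)) \<and>
     continuous_map (prod_topology T X) X (\<lambda>(g, x). act g x)"

definition orbit :: "('g, 'b) monoid_scheme \<Rightarrow> ('g \<Rightarrow> 'x \<Rightarrow> 'x) \<Rightarrow> 'x \<Rightarrow> 'x set" where
  "orbit G act x = (\<lambda>g. act g x) ` carrier G"

definition stabiliser :: "('g, 'b) monoid_scheme \<Rightarrow> ('g \<Rightarrow> 'x \<Rightarrow> 'x) \<Rightarrow> 'x \<Rightarrow> 'g set" where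
  "stabiliser G act x = {g \<in> carrier G. act g x = x}"

definition split_space ::
  "('g, 'b) monoid_scheme \<Rightarrow> 'g topology \<Rightarrow> 'x topology \<Rightarrow> ('g \<Rightarrow> 'x \<Rightarrow> 'x) \<Rightarrow>
   'a topology \<Rightarrow> ('x \<Rightarrow> 'a) \<Rightarrow> ('a \<Rightarrow> 'x) \<Rightarrow> bool" where
  "split_space G T X act A \<pi> \<phi> \<longleftrightarrow>
     cont_action G T X act \<and>
     continuous_map X A \<pi> \<and> \<pi> ` topspace X = topspace A \<and>
     (\<forall>a\<in>topspace A. \<exists>x\<in>topspace X. {y \<in> topspace X. \<pi> y = a} = orbit G act x) \<and>
     continuous_map A X \<phi> \<and> (\<forall>a\<in>topspace A. \<pi> (\<phi> a) = a)"

definition gfib :: "('g \<times> 'a) set \<Rightarrow> 'a \<Rightarrow> 'g set" where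
  "gfib I a = {g. (g, a) \<in> I}"

definition GA_groupoid ::
  "('g, 'b) monoid_scheme \<Rightarrow> 'g topology \<Rightarrow> 'a topology \<Rightarrow> ('g \<times> 'a) set \<Rightarrow> bool" where
  "GA_groupoid G T A I \<longleftrightarrow> I \<subseteq> carrier G \<times> topspace A \<and>
     (\<forall>a\<in>topspace A. subgroup (gfib I a) G \<and> closedin T (gfib I a))"

definition weakly_locally_maximal :: "'a topology \<Rightarrow> ('g \<times> 'a) set \<Rightarrow> bool" where
  "weakly_locally_maximal A I \<longleftrightarrow>
     (\<forall>a\<in>topspace A. \<exists>U. openin A U \<and> a \<in> U \<and> (\<forall>u\<in>U. gfib I u \<subseteq> gfib I a))"

definition isotropy_groupoid ::
  "('g, 'b) monoid_scheme \<Rightarrow> ('g \<Rightarrow> 'x \<Rightarrow> 'x) \<Rightarrow> 'a topology \<Rightarrow> ('a \<Rightarrow> 'x) \<Rightarrow> ('g \<times> 'a) set" where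
  "isotropy_groupoid G act A \<phi> = {(g, a). a \<in> topspace A \<and> g \<in> stabiliser G act (\<phi> a)}"

definition equivariant_homeo ::
  "('g, 'b) monoid_scheme \<Rightarrow> 'x topology \<Rightarrow> ('g \<Rightarrow> 'x \<Rightarrow> 'x) \<Rightarrow>
   'y topology \<Rightarrow> ('g \<Rightarrow> 'y \<Rightarrow> 'y) \<Rightarrow> ('x \<Rightarrow> 'y) \<Rightarrow> bool" where
  "equivariant_homeo G X act Y act' F \<longleftrightarrow> homeomorphic_map X Y F \<and>
     (\<forall>g\<in>carrier G. \<forall>x\<in>topspace X. F (act g x) = act' g (F x))"

end

theory Submission
  imports Defs "HOL-Algebra.Left_Coset"
begin

text \<open>Everything is read off the compact space \<open>\<Gamma> \<times> A\<close>. For a split \<open>\<Gamma>\<close>-space \<open>(X, \<pi>, \<phi>)\<close>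
  the orbit map \<open>(g, a) \<mapsto> g \<phi>(a)\<close> identifies \<open>(g, a)\<close> with \<open>(h, b)\<close> exactly when \<open>a = b\<close> and
  \<open>g\<inverse>h\<close> lies in the stabiliser of \<open>\<phi>(a)\<close>, i.e. in the fibre of the isotropy groupoid over \<open>a\<close>.
  When \<open>X\<close> is locally compact the orbit map is proper, because \<open>\<Gamma>\<close> is compact, and hence a quotient
  map; so \<open>X\<close> is determined by the groupoid up to a unique equivariant homeomorphism fixing the
  section. Conversely, the quotient of \<open>\<Gamma> \<times> A\<close> by this relation, realised on pairs \<open>(g\<I>\<^sub>a, a)\<close>,
  is a split \<open>\<Gamma>\<close>-space with isotropy groupoid \<open>\<I>\<close>. Weak local maximality together with closedness
  of the fibres makes \<open>\<I>\<close> closed in \<open>\<Gamma> \<times> A\<close>, so the saturation of a closed set, being the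
  projection along the compact factor \<open>\<Gamma>\<close> of a closed set, is closed; the quotient map is therefore
  proper, and the quotient is locally compact Hausdorff.\<close>

section \<open>Quotient topologies\<close>

definition quotient_topology :: "'a topology \<Rightarrow> ('a \<Rightarrow> 'b) \<Rightarrow> 'b topology" where
  "quotient_topology X f =
     topology (\<lambda>U. U \<subseteq> f ` topspace X \<and> openin X {x \<in> topspace X. f x \<in> U})"

lemma istopology_quotient:
  "istopology (\<lambda>U. U \<subseteq> f ` topspace X \<and> openin X {x \<in> topspace X. f x \<in> U})"
proof -
  have "{x \<in> topspace X. f x \<in> S \<inter> T} = {x \<in> topspace X. f x \<in> S} \<inter> {x \<in> topspace X. f x \<in> T}"
    for S T by auto
  moreover have "{x \<in> topspace X. f x \<in> \<Union>\<U>} = (\<Union>U\<in>\<U>. {x \<in> topspace X. f x \<in> U})" for \<U>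
    by auto
  ultimately show ?thesis
    unfolding istopology_def by (auto intro!: openin_Int openin_Union)
qed

lemma openin_quotient_topology:
  "openin (quotient_topology X f) U \<longleftrightarrow> U \<subseteq> f ` topspace X \<and> openin X {x \<in> topspace X. f x \<in> U}"
  unfolding quotient_topology_def topology_inverse'[OF istopology_quotient] ..

lemma topspace_quotient_topology: "topspace (quotient_topology X f) = f ` topspace X"
proof
  show "topspace (quotient_topology X f) \<subseteq> f ` topspace X"
    unfolding topspace_def[of "quotient_topology X f"] by (auto simp: openin_quotient_topology)
  have "{x \<in> topspace X. f x \<in> f ` topspace X} = topspace X"
    by auto
  then have "openin (quotient_topology X f) (f ` topspace X)"
    by (simp add: openin_quotient_topology)
  then show "f ` topspace X \<subseteq> topspace (quotient_topology X f)"
    by (rule openin_subset)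
qed

lemma quotient_map_quotient_topology: "quotient_map X (quotient_topology X f) f"
  unfolding quotient_map_def by (auto simp: openin_quotient_topology topspace_quotient_topology)

lemma Hausdorff_space_proper_map_image:
  assumes proper: "proper_map X Y f" and onto: "f ` topspace X = topspace Y"
    and Hausdorff: "Hausdorff_space X"
  shows "Hausdorff_space Y"
  unfolding Hausdorff_space_def
proof (intro allI impI, elim conjE)
  fix y1 y2 assume y: "y1 \<in> topspace Y" "y2 \<in> topspace Y" "y1 \<noteq> y2"
  let ?fibre = "\<lambda>y. {x \<in> topspace X. f x = y}"
  obtain U1 U2 where U: "openin X U1" "openin X U2" "?fibre y1 \<subseteq> U1" "?fibre y2 \<subseteq> U2" "disjnt U1 U2"
    using Hausdorff_space_compact_separation[OF Hausdorff, of "?fibre y1" "?fibre y2"] proper y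
    by (auto simp: proper_map_def disjnt_def)
  let ?V = "\<lambda>U. topspace Y - f ` (topspace X - U)"
  have "openin Y (?V U)" if "openin X U" for U
    using proper that by (auto intro!: openin_diff simp: proper_map_def closed_map_def)
  then have "openin Y (?V U1)" "openin Y (?V U2)"
    using U by auto
  moreover have "y1 \<in> ?V U1" "y2 \<in> ?V U2"
    using y U by auto
  moreover have "disjnt (?V U1) (?V U2)"
    using onto U(5) by (fastforce simp: disjnt_def)
  ultimately show "\<exists>V1 V2. openin Y V1 \<and> openin Y V2 \<and> y1 \<in> V1 \<and> y2 \<in> V2 \<and> disjnt V1 V2"
    by blast
qed

lemma homeomorphic_map_quotient_maps:
  assumes f: "quotient_map X Y f" and g: "quotient_map X Y' g"
    and same_fibres: "\<And>x x'. \<lbrakk>x \<in> topspace X; x' \<in> topspace X\<rbrakk> \<Longrightarrow> f x = f x' \<longleftrightarrow> g x = g x'"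
  obtains h where "homeomorphic_map Y Y' h" "\<And>x. x \<in> topspace X \<Longrightarrow> h (f x) = g x"
proof -
  obtain h where h: "continuous_map Y Y' h" "\<And>x. x \<in> topspace X \<Longrightarrow> h (f x) = g x"
    using quotient_map_lift_exists[OF f quotient_imp_continuous_map[OF g]] same_fibres by metis
  obtain k where k: "continuous_map Y' Y k" "\<And>x. x \<in> topspace X \<Longrightarrow> k (g x) = f x"
    using quotient_map_lift_exists[OF g quotient_imp_continuous_map[OF f]] same_fibres by metis
  have "homeomorphic_maps Y Y' h k"
    unfolding homeomorphic_maps_def
    using h k quotient_imp_surjective_map[OF f] quotient_imp_surjective_map[OF g] by force
  then show thesis
    using that h(2) homeomorphic_map_maps by blast
qed

section \<open>Topological groups and groupoids\<close>

lemma continuous_map_group_mult: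
  assumes "topological_group G T" "continuous_map W T f" "continuous_map W T g"
  shows "continuous_map W T (\<lambda>x. f x \<otimes>\<^bsub>G\<^esub> g x)"
  using continuous_map_compose[OF continuous_map_pairedI[OF assms(2,3)], of T "\<lambda>(g, h). g \<otimes>\<^bsub>G\<^esub> h"]
    assms(1) by (simp add: topological_group_def o_def)

lemma continuous_map_group_inv:
  assumes "topological_group G T" "continuous_map W T f"
  shows "continuous_map W T (\<lambda>x. inv\<^bsub>G\<^esub> f x)"
  using continuous_map_compose[OF assms(2), of T "\<lambda>g. inv\<^bsub>G\<^esub> g"] assms(1)
  by (simp add: topological_group_def o_def)

lemma gfib_isotropy_groupoid:
  "a \<in> topspace A \<Longrightarrow> gfib (isotropy_groupoid G act A \<phi>) a = stabiliser G act (\<phi> a)"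
  by (auto simp: isotropy_groupoid_def gfib_def stabiliser_def)

lemma closedin_weakly_locally_maximal_groupoid:
  assumes groupoid: "GA_groupoid G T A I" and wlm: "weakly_locally_maximal A I"
  shows "closedin (prod_topology T A) I"
  unfolding closedin_def
proof
  have "gfib I a \<subseteq> topspace T" if "a \<in> topspace A" for a
    using groupoid that closedin_subset by (auto simp: GA_groupoid_def)
  then show "I \<subseteq> topspace (prod_topology T A)"
    using groupoid by (auto simp: GA_groupoid_def gfib_def)
  show "openin (prod_topology T A) (topspace (prod_topology T A) - I)"
    unfolding openin_subopen[of _ "topspace (prod_topology T A) - I"]
  proof
    fix z assume "z \<in> topspace (prod_topology T A) - I"
    then obtain g a where z: "z = (g, a)" "g \<in> topspace T" "a \<in> topspace A" "g \<notin> gfib I a"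
      by (auto simp: gfib_def)
    obtain U where U: "openin A U" "a \<in> U" "\<forall>u\<in>U. gfib I u \<subseteq> gfib I a"
      using wlm z(3) by (auto simp: weakly_locally_maximal_def)
    have "openin T (topspace T - gfib I a)"
      using groupoid z(3) by (auto simp: GA_groupoid_def)
    then have "openin (prod_topology T A) ((topspace T - gfib I a) \<times> U)"
      using U(1) by (simp add: openin_prod_Times_iff)
    moreover have "(topspace T - gfib I a) \<times> U \<subseteq> topspace (prod_topology T A) - I"
      using U openin_subset[OF U(1)] by (auto simp: gfib_def)
    ultimately show "\<exists>V. openin (prod_topology T A) V \<and> z \<in> V \<and> V \<subseteq> topspace (prod_topology T A) - I"
      using z U(2) by blast
  qed
qed

section \<open>Split spaces as quotients of \<open>\<Gamma> \<times> A\<close>\<close>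

locale split_Gspace =
  fixes G :: "('g, 'b) monoid_scheme" (structure) and T :: "'g topology"
    and X :: "'x topology" and act :: "'g \<Rightarrow> 'x \<Rightarrow> 'x"
    and A :: "'a topology" and \<pi> :: "'x \<Rightarrow> 'a" and \<phi> :: "'a \<Rightarrow> 'x"
  assumes topological_group: "topological_group G T"
    and split_space: "split_space G T X act A \<pi> \<phi>"
begin

sublocale group G
  using topological_group by (simp add: topological_group_def)

lemma topspace_eq_carrier: "topspace T = carrier G"
  using topological_group by (simp add: topological_group_def)

lemma act_closed: "\<lbrakk>g \<in> carrier G; x \<in> topspace X\<rbrakk> \<Longrightarrow> act g x \<in> topspace X"
  and act_one: "x \<in> topspace X \<Longrightarrow> act \<one> x = x"
  and act_mult: "\<lbrakk>g \<in> carrier G; h \<in> carrier G; x \<in> topspace X\<rbrakk> \<Longrightarrow> act (g \<otimes> h) x = act g (act h x)"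
  and continuous_map_act: "continuous_map (prod_topology T X) X (\<lambda>(g, x). act g x)"
  using split_space by (simp_all add: split_space_def cont_action_def)

lemma continuous_map_\<phi>: "continuous_map A X \<phi>"
  and continuous_map_\<pi>: "continuous_map X A \<pi>"
  and \<pi>_\<phi>: "a \<in> topspace A \<Longrightarrow> \<pi> (\<phi> a) = a"
  and \<pi>_fibre: "a \<in> topspace A \<Longrightarrow> \<exists>x\<in>topspace X. {y \<in> topspace X. \<pi> y = a} = orbit G act x"
  using split_space by (simp_all add: split_space_def)

lemma \<phi>_in_topspace: "a \<in> topspace A \<Longrightarrow> \<phi> a \<in> topspace X"
  using continuous_map_\<phi> continuous_map_image_subset_topspace by blast

lemma \<pi>_in_topspace: "x \<in> topspace X \<Longrightarrow> \<pi> x \<in> topspace A"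
  using continuous_map_\<pi> continuous_map_image_subset_topspace by blast

lemma \<pi>_fibre_eq_orbit_\<phi>:
  assumes a: "a \<in> topspace A"
  shows "{x \<in> topspace X. \<pi> x = a} = orbit G act (\<phi> a)"
proof -
  obtain x0 where x0: "x0 \<in> topspace X" "{x \<in> topspace X. \<pi> x = a} = orbit G act x0"
    using \<pi>_fibre[OF a] by blast
  then obtain h where h: "h \<in> carrier G" "\<phi> a = act h x0"
    using \<phi>_in_topspace[OF a] \<pi>_\<phi>[OF a] by (auto simp: orbit_def)
  have "orbit G act x0 = orbit G act (\<phi> a)"
    unfolding orbit_def
  proof (intro subset_antisym image_subsetI)
    fix g assume g: "g \<in> carrier G"
    have "act g x0 = act (g \<otimes> inv h) (\<phi> a)"
      using g h x0(1) by (simp add: act_mult[symmetric] m_assoc)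
    then show "act g x0 \<in> (\<lambda>g. act g (\<phi> a)) ` carrier G"
      using g h(1) by blast
    have "act g (\<phi> a) = act (g \<otimes> h) x0"
      using g h x0(1) by (simp add: act_mult)
    then show "act g (\<phi> a) \<in> (\<lambda>g. act g x0) ` carrier G"
      using g h(1) by blast
  qed
  with x0 show ?thesis by simp
qed

lemma \<pi>_act:
  assumes g: "g \<in> carrier G" and x: "x \<in> topspace X"
  shows "\<pi> (act g x) = \<pi> x"
proof -
  define a where "a = \<pi> x"
  have a: "a \<in> topspace A"
    using x by (simp add: a_def \<pi>_in_topspace)
  obtain h where h: "h \<in> carrier G" "x = act h (\<phi> a)"
    using x \<pi>_fibre_eq_orbit_\<phi>[OF a] by (auto simp: a_def orbit_def)
  have "act g x = act (g \<otimes> h) (\<phi> a)"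
    using g h a by (simp add: act_mult \<phi>_in_topspace)
  then have "act g x \<in> {y \<in> topspace X. \<pi> y = a}"
    unfolding \<pi>_fibre_eq_orbit_\<phi>[OF a] orbit_def using g h(1) by blast
  then show ?thesis
    by (simp add: a_def)
qed

lemma topspace_act_\<phi>E:
  assumes x: "x \<in> topspace X"
  obtains g a where "g \<in> carrier G" "a \<in> topspace A" "x = act g (\<phi> a)"
proof -
  have "x \<in> orbit G act (\<phi> (\<pi> x))"
    using x \<pi>_in_topspace \<pi>_fibre_eq_orbit_\<phi> by blast
  then show thesis
    using that x \<pi>_in_topspace by (auto simp: orbit_def)
qed

lemma act_inv_act: "\<lbrakk>g \<in> carrier G; x \<in> topspace X\<rbrakk> \<Longrightarrow> act (inv g) (act g x) = x"
  by (simp add: act_mult[symmetric] act_one)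

definition orbit_map :: "'g \<times> 'a \<Rightarrow> 'x" where
  "orbit_map = (\<lambda>(g, a). act g (\<phi> a))"

lemma orbit_map_image: "orbit_map ` topspace (prod_topology T A) = topspace X"
  by (auto simp: orbit_map_def topspace_eq_carrier act_closed \<phi>_in_topspace elim!: topspace_act_\<phi>E)

lemma orbit_map_eq_iff:
  assumes g: "g \<in> carrier G" and h: "h \<in> carrier G" and a: "a \<in> topspace A" and b: "b \<in> topspace A"
  shows "orbit_map (g, a) = orbit_map (h, b) \<longleftrightarrow>
           a = b \<and> inv g \<otimes> h \<in> gfib (isotropy_groupoid G act A \<phi>) a"
proof -
  have "a = b" if "act g (\<phi> a) = act h (\<phi> b)"
    using that g h a b \<pi>_act \<pi>_\<phi> \<phi>_in_topspace by metis
  moreover have "act g (\<phi> a) = act h (\<phi> a) \<longleftrightarrow> act (inv g \<otimes> h) (\<phi> a) = \<phi> a"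
    using g h a by (metis act_inv_act act_mult act_closed \<phi>_in_topspace inv_closed)
  ultimately show ?thesis
    using g h a by (auto simp: orbit_map_def gfib_isotropy_groupoid stabiliser_def)
qed

lemma continuous_map_orbit_map: "continuous_map (prod_topology T A) X orbit_map"
proof -
  have "continuous_map (prod_topology T A) (prod_topology T X) (\<lambda>z. (fst z, \<phi> (snd z)))"
    by (intro continuous_map_pairedI continuous_map_fst
        continuous_map_compose[OF continuous_map_snd continuous_map_\<phi>, unfolded o_def])
  from continuous_map_compose[OF this continuous_map_act] show ?thesis
    by (simp add: orbit_map_def o_def case_prod_unfold)
qed

lemma quotient_map_orbit_map:
  assumes "compact_space T" and "loc_compact X"
  shows "quotient_map (prod_topology T A) X orbit_map"
proof -
  have proper: "proper_map (prod_topology T A) X orbit_map"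
  proof (rule compact_imp_proper_map)
    show "k_space X" "kc_space X"
      using \<open>loc_compact X\<close> by (auto simp: loc_compact_def locally_compact_imp_k_space Hausdorff_imp_kc_space)
    show "orbit_map \<in> topspace (prod_topology T A) \<rightarrow> topspace X"
      using orbit_map_image by blast
    show "continuous_map (prod_topology T A) X orbit_map \<or> kc_space (prod_topology T A)"
      using continuous_map_orbit_map by blast
  next
    fix K assume K: "compactin X K"
    let ?S = "{z \<in> topspace (prod_topology T A). orbit_map z \<in> K}"
    have "closedin (prod_topology T A) ?S"
      using closedin_continuous_map_preimage[OF continuous_map_orbit_map] compactin_imp_closedin K
        \<open>loc_compact X\<close> by (auto simp: loc_compact_def)
    moreover have "?S \<subseteq> topspace T \<times> \<pi> ` K"
      by (force simp: orbit_map_def topspace_eq_carrier \<pi>_act \<phi>_in_topspace \<pi>_\<phi>)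
    moreover have "compactin (prod_topology T A) (topspace T \<times> \<pi> ` K)"
      using \<open>compact_space T\<close> image_compactin[OF K continuous_map_\<pi>]
      by (simp add: compactin_Times compact_space_def)
    ultimately show "compactin (prod_topology T A) ?S"
      using closed_compactin by blast
  qed
  show ?thesis
    by (intro continuous_closed_imp_quotient_map continuous_map_orbit_map orbit_map_image
        proper_imp_closed_map proper)
qed

lemma equivariant_maps_eq_on_section:
  assumes F: "\<forall>g\<in>carrier G. \<forall>x\<in>topspace X. F (act g x) = act' g (F x)"
    and F': "\<forall>g\<in>carrier G. \<forall>x\<in>topspace X. F' (act g x) = act' g (F' x)"
    and agree: "\<forall>a\<in>topspace A. F (\<phi> a) = F' (\<phi> a)"
    and x: "x \<in> topspace X"
  shows "F x = F' x"
  using x by (rule topspace_act_\<phi>E) (simp add: F F' agree \<phi>_in_topspace)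

end

theorem split_spaces_equivariantly_homeomorphic:
  assumes topological_group: "topological_group G T" and "compact_space T"
    and X: "split_space G T X act A \<pi> \<phi>" "loc_compact X"
    and X': "split_space G T X' act' A \<pi>' \<phi>'" "loc_compact X'"
    and same_isotropy: "isotropy_groupoid G act A \<phi> = isotropy_groupoid G act' A \<phi>'"
  obtains F where "equivariant_homeo G X act X' act' F" "\<forall>a\<in>topspace A. \<phi>' a = F (\<phi> a)"
proof -
  interpret X: split_Gspace G T X act A \<pi> \<phi>
    using topological_group X(1) by unfold_locales
  interpret X': split_Gspace G T X' act' A \<pi>' \<phi>'
    using topological_group X'(1) by unfold_locales
  obtain F where F: "homeomorphic_map X X' F"
    and F_orbit_map: "\<And>z. z \<in> topspace (prod_topology T A) \<Longrightarrow> F (X.orbit_map z) = X'.orbit_map z"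
  proof (rule homeomorphic_map_quotient_maps)
    show "quotient_map (prod_topology T A) X X.orbit_map"
      using X.quotient_map_orbit_map \<open>compact_space T\<close> X(2) .
    show "quotient_map (prod_topology T A) X' X'.orbit_map"
      using X'.quotient_map_orbit_map \<open>compact_space T\<close> X'(2) .
    show "X.orbit_map z = X.orbit_map w \<longleftrightarrow> X'.orbit_map z = X'.orbit_map w"
      if "z \<in> topspace (prod_topology T A)" "w \<in> topspace (prod_topology T A)" for z w
      using that X.orbit_map_eq_iff X'.orbit_map_eq_iff same_isotropy
      by (auto simp: X.topspace_eq_carrier)
  qed blast
  have F_act_\<phi>: "F (act g (\<phi> a)) = act' g (\<phi>' a)" if "g \<in> carrier G" "a \<in> topspace A" for g a
    using F_orbit_map[of "(g, a)"] that by (simp add: X.orbit_map_def X'.orbit_map_def X.topspace_eq_carrier)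
  have "F (act g x) = act' g (F x)" if g: "g \<in> carrier G" and x: "x \<in> topspace X" for g x
    using x by (rule X.topspace_act_\<phi>E)
      (simp add: g F_act_\<phi> X.act_mult[symmetric] X'.act_mult[symmetric] X.\<phi>_in_topspace X'.\<phi>_in_topspace)
  then have "equivariant_homeo G X act X' act' F"
    using F by (simp add: equivariant_homeo_def)
  moreover have "\<forall>a\<in>topspace A. \<phi>' a = F (\<phi> a)"
    using F_act_\<phi>[OF X.one_closed] by (simp add: X.act_one X'.act_one X.\<phi>_in_topspace X'.\<phi>_in_topspace)
  ultimately show thesis
    using that by blast
qed

section \<open>The model split space of a groupoid\<close>

locale groupoid_model =
  fixes G :: "('g, 'b) monoid_scheme" (structure) and T :: "'g topology"
    and A :: "'a topology" and I :: "('g \<times> 'a) set"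
  assumes topological_group: "topological_group G T"
    and compact_group: "compact_space T" and Hausdorff_group: "Hausdorff_space T"
    and loc_compact_base: "loc_compact A"
    and groupoid: "GA_groupoid G T A I" and weakly_locally_maximal: "weakly_locally_maximal A I"
begin

sublocale group G
  using topological_group by (simp add: topological_group_def)

lemma topspace_eq_carrier: "topspace T = carrier G"
  using topological_group by (simp add: topological_group_def)

lemma subgroup_gfib: "a \<in> topspace A \<Longrightarrow> subgroup (gfib I a) G"
  and closedin_gfib: "a \<in> topspace A \<Longrightarrow> closedin T (gfib I a)"
  and groupoid_subset: "I \<subseteq> carrier G \<times> topspace A"
  using groupoid by (simp_all add: GA_groupoid_def)

abbreviation Z :: "('g \<times> 'a) topology" where
  "Z \<equiv> prod_topology T A"

definition model_map :: "'g \<times> 'a \<Rightarrow> 'g set \<times> 'a" where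
  "model_map = (\<lambda>(g, a). (l_coset G g (gfib I a), a))"

abbreviation model_space :: "('g set \<times> 'a) topology" where
  "model_space \<equiv> quotient_topology Z model_map"

definition model_action :: "'g \<Rightarrow> 'g set \<times> 'a \<Rightarrow> 'g set \<times> 'a" where
  "model_action g = (\<lambda>(C, a). (l_coset G g C, a))"

definition model_section :: "'a \<Rightarrow> 'g set \<times> 'a" where
  "model_section a = model_map (\<one>, a)"

lemma model_map_eq_iff:
  assumes g: "g \<in> carrier G" and h: "h \<in> carrier G" and a: "a \<in> topspace A"
  shows "model_map (g, a) = model_map (h, b) \<longleftrightarrow> a = b \<and> inv g \<otimes> h \<in> gfib I a"
proof -
  interpret H: subgroup "gfib I a" G
    using subgroup_gfib[OF a] .
  have "l_coset G g (gfib I a) = l_coset G h (gfib I a) \<longleftrightarrow> inv g \<otimes> h \<in> gfib I a"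
  proof
    assume "l_coset G g (gfib I a) = l_coset G h (gfib I a)"
    then show "inv g \<otimes> h \<in> gfib I a"
      using lcos_self[OF h subgroup_gfib[OF a]] H.lcos_module_imp[OF is_group g] by simp
  next
    assume "inv g \<otimes> h \<in> gfib I a"
    then show "l_coset G g (gfib I a) = l_coset G h (gfib I a)"
      using l_repr_independence[OF H.lcos_module_rev[OF is_group g h] g subgroup_gfib[OF a]] by simp
  qed
  then show ?thesis
    by (auto simp: model_map_def)
qed

lemma quotient_map_model_map: "quotient_map Z model_space model_map"
  by (rule quotient_map_quotient_topology)

lemma continuous_map_model_map: "continuous_map Z model_space model_map"
  by (rule quotient_imp_continuous_map[OF quotient_map_model_map])

lemma topspace_model_space: "topspace model_space = model_map ` (carrier G \<times> topspace A)"
  by (simp add: topspace_quotient_topology topspace_eq_carrier)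

lemma snd_model_map [simp]: "snd (model_map z) = snd z"
  by (simp add: model_map_def case_prod_unfold)

lemma model_map_saturation:
  assumes C: "C \<subseteq> topspace Z"
  shows "{z \<in> topspace Z. model_map z \<in> model_map ` C} =
           snd ` {(k, h, a) \<in> topspace (prod_topology T Z). (k, a) \<in> I \<and> (h \<otimes> inv k, a) \<in> C}"
    (is "?lhs = ?rhs")
proof (intro subset_antisym subsetI)
  fix z assume z: "z \<in> ?lhs"
  obtain h a where ha: "z = (h, a)"
    by fastforce
  obtain g b where gb: "(g, b) \<in> C" "model_map (h, a) = model_map (g, b)"
    using z ha by auto
  have h: "h \<in> carrier G" "a \<in> topspace A" and g: "g \<in> carrier G" "b \<in> topspace A"
    using z ha gb(1) C by (auto simp: topspace_eq_carrier)
  have "model_map (g, b) = model_map (h, a)"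
    using gb(2) by simp
  then have ba: "b = a" and k: "inv g \<otimes> h \<in> gfib I b"
    using model_map_eq_iff[OF g(1) h(1) g(2)] by blast+
  have "h \<otimes> inv (inv g \<otimes> h) = g"
    using g h by (simp add: inv_mult_group m_assoc[symmetric])
  then have "(inv g \<otimes> h, h, a) \<in> {(k, h, a) \<in> topspace (prod_topology T Z). (k, a) \<in> I \<and> (h \<otimes> inv k, a) \<in> C}"
    using g h k gb(1) ba by (simp add: topspace_eq_carrier gfib_def)
  then show "z \<in> ?rhs"
    unfolding ha by (rule rev_image_eqI) simp
next
  fix z assume "z \<in> ?rhs"
  then obtain k h a where z: "z = (h, a)" "k \<in> carrier G" "h \<in> carrier G" "a \<in> topspace A"
    and kI: "(k, a) \<in> I" and hk: "(h \<otimes> inv k, a) \<in> C"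
    by (auto simp: topspace_eq_carrier)
  have "inv (h \<otimes> inv k) \<otimes> h = k"
    using z by (simp add: inv_mult_group m_assoc)
  then have "model_map (h \<otimes> inv k, a) = model_map (h, a)"
    using model_map_eq_iff[of "h \<otimes> inv k" h a a] z kI by (simp add: gfib_def)
  then show "z \<in> ?lhs"
    using z hk by (auto simp: topspace_eq_carrier intro!: image_eqI[where x = "(h \<otimes> inv k, a)"])
qed

lemma closed_map_model_map: "closed_map Z model_space model_map"
  unfolding closed_map_def
proof (intro allI impI)
  fix C assume C: "closedin Z C"
  define f where "f = (\<lambda>(k, h :: 'g, a :: 'a). (k :: 'g, a))"
  define f' where "f' = (\<lambda>(k, h :: 'g, a :: 'a). (h \<otimes> inv k, a))"
  have fst_snd: "continuous_map (prod_topology T Z) T (\<lambda>w. fst (snd w))"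
    and snd_snd: "continuous_map (prod_topology T Z) A (\<lambda>w. snd (snd w))"
    using continuous_map_compose[OF continuous_map_snd continuous_map_fst]
      continuous_map_compose[OF continuous_map_snd continuous_map_snd] by (simp_all add: o_def)
  have "continuous_map (prod_topology T Z) Z f"
    using continuous_map_pairedI[OF continuous_map_fst snd_snd] by (simp add: f_def case_prod_unfold)
  moreover have "continuous_map (prod_topology T Z) Z f'"
    using continuous_map_pairedI[OF continuous_map_group_mult[OF topological_group fst_snd
          continuous_map_group_inv[OF topological_group continuous_map_fst]] snd_snd]
    by (simp add: f'_def case_prod_unfold)
  ultimately have "closedin (prod_topology T Z)
      ({w \<in> topspace (prod_topology T Z). f w \<in> I} \<inter> {w \<in> topspace (prod_topology T Z). f' w \<in> C})"
    using closedin_weakly_locally_maximal_groupoid[OF groupoid weakly_locally_maximal] C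
    by (intro closedin_Int closedin_continuous_map_preimage)
  also have "{w \<in> topspace (prod_topology T Z). f w \<in> I} \<inter> {w \<in> topspace (prod_topology T Z). f' w \<in> C}
      = {(k, h, a) \<in> topspace (prod_topology T Z). (k, a) \<in> I \<and> (h \<otimes> inv k, a) \<in> C}"
    by (auto simp: f_def f'_def)
  finally have "closedin Z (snd ` {(k, h, a) \<in> topspace (prod_topology T Z).
                                    (k, a) \<in> I \<and> (h \<otimes> inv k, a) \<in> C})"
    by (rule closed_map_snd[OF compact_group, unfolded closed_map_def, rule_format])
  then have "closedin Z {z \<in> topspace Z. model_map z \<in> model_map ` C}"
    unfolding model_map_saturation[OF closedin_subset[OF C]] .
  moreover have "model_map ` C \<subseteq> topspace model_space"
    using closedin_subset[OF C] by (simp add: topspace_quotient_topology image_mono)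
  ultimately show "closedin model_space (model_map ` C)"
    using quotient_map_model_map unfolding quotient_map_closedin by blast
qed

lemma l_coset_gfib_iff:
  assumes "g \<in> carrier G" "h \<in> carrier G" "a \<in> topspace A"
  shows "h \<in> l_coset G g (gfib I a) \<longleftrightarrow> inv g \<otimes> h \<in> gfib I a"
  using subgroup.lcos_module_imp[OF subgroup_gfib is_group] subgroup.lcos_module_rev[OF subgroup_gfib is_group]
    assms by blast

lemma l_coset_gfib_subset: "\<lbrakk>g \<in> carrier G; a \<in> topspace A\<rbrakk> \<Longrightarrow> l_coset G g (gfib I a) \<subseteq> carrier G"
  using l_coset_subset_G subgroup.subset subgroup_gfib by blast

lemma model_map_fibre:
  assumes g: "g \<in> carrier G" and a: "a \<in> topspace A"
  shows "{z \<in> topspace Z. model_map z = model_map (g, a)} = (l_coset G g (gfib I a)) \<times> {a}"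
proof (intro equalityI subsetI)
  fix z assume z: "z \<in> {z \<in> topspace Z. model_map z = model_map (g, a)}"
  obtain h b where hb: "z = (h, b)"
    by fastforce
  have h: "h \<in> carrier G" "b \<in> topspace A"
    using z hb by (auto simp: topspace_eq_carrier)
  have "model_map (g, a) = model_map (h, b)"
    using z hb by simp
  then show "z \<in> (l_coset G g (gfib I a)) \<times> {a}"
    using hb model_map_eq_iff[OF g h(1) a] l_coset_gfib_iff[OF g h(1) a] by auto
next
  fix z assume "z \<in> (l_coset G g (gfib I a)) \<times> {a}"
  then obtain h where z: "z = (h, a)" "h \<in> l_coset G g (gfib I a)"
    by auto
  then have h: "h \<in> carrier G"
    using l_coset_gfib_subset[OF g a] by blast
  then have "model_map (g, a) = model_map (h, a)"
    using model_map_eq_iff[OF g h a] l_coset_gfib_iff[OF g h a] z(2) by simp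
  then show "z \<in> {z \<in> topspace Z. model_map z = model_map (g, a)}"
    using z h a by (simp add: topspace_eq_carrier)
qed

lemma compactin_l_coset_gfib:
  assumes g: "g \<in> carrier G" and a: "a \<in> topspace A"
  shows "compactin T (l_coset G g (gfib I a))"
proof -
  have "continuous_map T T (\<lambda>k. g \<otimes> k)"
    using g by (intro continuous_map_group_mult[OF topological_group] continuous_map_id[unfolded id_def])
      (simp add: topspace_eq_carrier)
  moreover have "compactin T (gfib I a)"
    using closedin_compact_space[OF compact_group closedin_gfib[OF a]] .
  moreover have "l_coset G g (gfib I a) = (\<lambda>k. g \<otimes> k) ` gfib I a"
    by (auto simp: l_coset_def)
  ultimately show ?thesis
    using image_compactin by metis
qed

lemma proper_map_model_map: "proper_map Z model_space model_map"
  unfolding proper_map_def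
proof (intro conjI ballI closed_map_model_map)
  fix y assume "y \<in> topspace model_space"
  then obtain g a where "g \<in> carrier G" "a \<in> topspace A" "y = model_map (g, a)"
    by (auto simp: topspace_model_space)
  then show "compactin Z {z \<in> topspace Z. model_map z = y}"
    using model_map_fibre compactin_l_coset_gfib by (simp add: compactin_Times)
qed

lemma Hausdorff_model_space: "Hausdorff_space model_space"
proof (rule Hausdorff_space_proper_map_image[OF proper_map_model_map])
  show "model_map ` topspace Z = topspace model_space"
    by (simp add: topspace_quotient_topology)
  show "Hausdorff_space Z"
    using Hausdorff_group loc_compact_base by (simp add: Hausdorff_space_prod_topology loc_compact_def)
qed

lemma continuous_map_snd_model_space: "continuous_map model_space A snd"
  by (rule continuous_compose_quotient_map[OF quotient_map_model_map])
    (simp add: continuous_map_eq[OF continuous_map_snd] o_def)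

lemma locally_compact_model_space: "locally_compact_space model_space"
  unfolding locally_compact_space_def
proof
  fix y assume y: "y \<in> topspace model_space"
  then obtain g a where ga: "g \<in> carrier G" "a \<in> topspace A" "y = model_map (g, a)"
    by (auto simp: topspace_model_space)
  obtain U K where UK: "openin A U" "compactin A K" "a \<in> U" "U \<subseteq> K"
    using loc_compact_base ga(2) by (auto simp: loc_compact_def locally_compact_space_def)
  have "openin model_space {y \<in> topspace model_space. snd y \<in> U}"
    using openin_continuous_map_preimage[OF continuous_map_snd_model_space UK(1)] .
  moreover have "compactin model_space (model_map ` (carrier G \<times> K))"
    using compact_group UK(2) image_compactin[OF _ continuous_map_model_map]
    by (simp add: compactin_Times compact_space_def topspace_eq_carrier)
  moreover have "{y \<in> topspace model_space. snd y \<in> U} \<subseteq> model_map ` (carrier G \<times> K)"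
  proof
    fix y' assume "y' \<in> {y \<in> topspace model_space. snd y \<in> U}"
    then obtain h b where "h \<in> carrier G" "b \<in> U" "y' = model_map (h, b)"
      by (auto simp: topspace_model_space)
    then show "y' \<in> model_map ` (carrier G \<times> K)"
      using UK(4) by blast
  qed
  moreover have "y \<in> {y \<in> topspace model_space. snd y \<in> U}"
    using y ga UK(3) by simp
  ultimately show "\<exists>U K. openin model_space U \<and> compactin model_space K \<and> y \<in> U \<and> U \<subseteq> K"
    by blast
qed

lemma loc_compact_model_space: "loc_compact model_space"
  using Hausdorff_model_space locally_compact_model_space by (simp add: loc_compact_def)

lemma model_action_model_map:
  "\<lbrakk>g \<in> carrier G; h \<in> carrier G; a \<in> topspace A\<rbrakk> \<Longrightarrow> model_action g (model_map (h, a)) = model_map (g \<otimes> h, a)"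
  using lcos_m_assoc[OF subgroup.subset[OF subgroup_gfib]] by (simp add: model_action_def model_map_def)

lemma continuous_map_model_action:
  "continuous_map (prod_topology T model_space) model_space (\<lambda>(g, y). model_action g y)"
proof (rule continuous_compose_quotient_map)
  show "quotient_map (prod_topology T Z) (prod_topology T model_space) (\<lambda>(g, z). (g, model_map z))"
    using quotient_map_prod_right[OF compact_imp_locally_compact_space[OF compact_group] _ quotient_map_model_map]
      Hausdorff_group by blast
  have "continuous_map (prod_topology T Z) model_space (\<lambda>w. model_map (fst w \<otimes> fst (snd w), snd (snd w)))"
    using continuous_map_compose[OF continuous_map_pairedI[OF
          continuous_map_group_mult[OF topological_group continuous_map_fst
            continuous_map_compose[OF continuous_map_snd continuous_map_fst, unfolded o_def]]
          continuous_map_compose[OF continuous_map_snd continuous_map_snd, unfolded o_def]]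
        continuous_map_model_map]
    by (simp add: o_def)
  then show "continuous_map (prod_topology T Z) model_space
      ((\<lambda>(g, y). model_action g y) \<circ> (\<lambda>(g, z). (g, model_map z)))"
    by (rule continuous_map_eq) (auto simp: topspace_eq_carrier model_action_model_map)
qed

lemma cont_action_model: "cont_action G T model_space model_action"
  unfolding cont_action_def
proof (intro conjI ballI continuous_map_model_action)
  fix y assume "y \<in> topspace model_space"
  then obtain h a where y: "h \<in> carrier G" "a \<in> topspace A" "y = model_map (h, a)"
    by (auto simp: topspace_model_space)
  show "model_action \<one> y = y"
    using y by (simp add: model_action_model_map)
  fix g assume g: "g \<in> carrier G"
  show "model_action g y \<in> topspace model_space"
    using g y by (auto simp: model_action_model_map topspace_model_space)
  fix g' assume g': "g' \<in> carrier G"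
  show "model_action (g \<otimes> g') y = model_action g (model_action g' y)"
    using g g' y by (simp add: model_action_model_map m_assoc)
qed

lemma model_action_section:
  "\<lbrakk>g \<in> carrier G; a \<in> topspace A\<rbrakk> \<Longrightarrow> model_action g (model_section a) = model_map (g, a)"
  by (simp add: model_section_def model_action_model_map)

lemma snd_fibre_model_space:
  assumes a: "a \<in> topspace A"
  shows "{y \<in> topspace model_space. snd y = a} = orbit G model_action (model_section a)"
  using a by (auto simp: orbit_def topspace_model_space model_action_section)

lemma split_space_model: "split_space G T model_space model_action A snd model_section"
  unfolding split_space_def
proof (intro conjI ballI cont_action_model continuous_map_snd_model_space)
  show "snd ` topspace model_space = topspace A"
    by (force simp: topspace_model_space)
  have "continuous_map A T (\<lambda>a. \<one>)"
    by (simp add: topspace_eq_carrier)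
  from continuous_map_compose[OF continuous_map_pairedI[OF this continuous_map_id] continuous_map_model_map]
  show "continuous_map A model_space model_section"
    by (simp add: model_section_def[abs_def] o_def)
  fix a assume a: "a \<in> topspace A"
  show "snd (model_section a) = a"
    by (simp add: model_section_def)
  show "\<exists>x\<in>topspace model_space. {y \<in> topspace model_space. snd y = a} = orbit G model_action x"
    using a snd_fibre_model_space by (auto simp: model_section_def topspace_model_space)
qed

lemma isotropy_groupoid_model: "isotropy_groupoid G model_action A model_section = I"
proof -
  have "stabiliser G model_action (model_section a) = gfib I a" if a: "a \<in> topspace A" for a
  proof -
    have "model_map (g, a) = model_section a \<longleftrightarrow> g \<in> gfib I a" if "g \<in> carrier G" for g
      using model_map_eq_iff[OF one_closed that a, of a] that
      by (simp add: model_section_def eq_commute[of "model_map (g, a)"])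
    then show ?thesis
      using a subgroup.subset[OF subgroup_gfib[OF a]] by (auto simp: stabiliser_def model_action_section)
  qed
  then show ?thesis
    using groupoid_subset by (auto simp: isotropy_groupoid_def gfib_def)
qed

end

theorem split_space_with_isotropy_groupoid_exists:
  fixes G :: "('g, 'b) monoid_scheme" and I :: "('g \<times> 'a) set"
  assumes "topological_group G T" and "compact_space T" and "Hausdorff_space T"
    and "loc_compact A"
    and "GA_groupoid G T A I" and "weakly_locally_maximal A I"
  shows "\<exists>(Y :: ('g set \<times> 'a) topology) act \<pi>Y \<phi>Y.
           split_space G T Y act A \<pi>Y \<phi>Y \<and> isotropy_groupoid G act A \<phi>Y = I \<and> loc_compact Y"
proof -
  interpret groupoid_model G T A I
    using assms by unfold_locales
  show ?thesis
  proof (intro exI conjI)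
    show "split_space G T model_space model_action A snd model_section"
      by (rule split_space_model)
    show "isotropy_groupoid G model_action A model_section = I"
      by (rule isotropy_groupoid_model)
    show "loc_compact model_space"
      by (rule loc_compact_model_space)
  qed
qed

theorem split_spaces_unique_equivariant_homeo:
  assumes topological_group: "topological_group G T" and "compact_space T"
    and X: "split_space G T X act A \<pi> \<phi>" "loc_compact X"
    and X': "split_space G T X' act' A \<pi>' \<phi>'" "loc_compact X'"
    and same_isotropy: "isotropy_groupoid G act A \<phi> = isotropy_groupoid G act' A \<phi>'"
  shows "\<exists>F. equivariant_homeo G X act X' act' F \<and> (\<forall>a\<in>topspace A. \<phi>' a = F (\<phi> a)) \<and>
           (\<forall>F'. equivariant_homeo G X act X' act' F' \<and> (\<forall>a\<in>topspace A. \<phi>' a = F' (\<phi> a))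
                 \<longrightarrow> (\<forall>x\<in>topspace X. F' x = F x))"
proof -
  interpret X: split_Gspace G T X act A \<pi> \<phi>
    using topological_group X(1) by unfold_locales
  obtain F where F: "equivariant_homeo G X act X' act' F" "\<forall>a\<in>topspace A. \<phi>' a = F (\<phi> a)"
    using split_spaces_equivariantly_homeomorphic[OF assms] .
  moreover have "F' x = F x"
    if "equivariant_homeo G X act X' act' F'" "\<forall>a\<in>topspace A. \<phi>' a = F' (\<phi> a)" "x \<in> topspace X" for F' x
  proof (rule X.equivariant_maps_eq_on_section)
    show "\<forall>g\<in>carrier G. \<forall>x\<in>topspace X. F' (act g x) = act' g (F' x)"
      and "\<forall>g\<in>carrier G. \<forall>x\<in>topspace X. F (act g x) = act' g (F x)"
      using that(1) F(1) by (simp_all add: equivariant_homeo_def)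
    show "\<forall>a\<in>topspace A. F' (\<phi> a) = F (\<phi> a)"
      using that(2) F(2) by simp
  qed (rule that(3))
  ultimately show ?thesis
    by blast
qed

theorem proposition2p1:
  fixes G :: "('g, 'b) monoid_scheme" and T :: "'g topology" and A :: "'a topology"
    and I :: "('g \<times> 'a) set"
  assumes "topological_group G T" and "compact_space T" and "Hausdorff_space T"
    and "loc_compact A"
    and "GA_groupoid G T A I" and "weakly_locally_maximal A I"
  shows "(\<exists>(Y :: ('g set \<times> 'a) topology) act \<pi>Y \<phi>Y.
            split_space G T Y act A \<pi>Y \<phi>Y \<and> isotropy_groupoid G act A \<phi>Y = I \<and> loc_compact Y)
       \<and> (\<forall>(X :: 'x topology) act \<pi> \<phi> (X' :: 'y topology) act' \<pi>' \<phi>'.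
           split_space G T X act A \<pi> \<phi> \<and> isotropy_groupoid G act A \<phi> = I \<and> loc_compact X \<and>
           split_space G T X' act' A \<pi>' \<phi>' \<and> isotropy_groupoid G act' A \<phi>' = I \<and> loc_compact X'
           \<longrightarrow> (\<exists>F. equivariant_homeo G X act X' act' F \<and> (\<forall>a\<in>topspace A. \<phi>' a = F (\<phi> a)) \<and>
                  (\<forall>F'. equivariant_homeo G X act X' act' F' \<and> (\<forall>a\<in>topspace A. \<phi>' a = F' (\<phi> a))
                        \<longrightarrow> (\<forall>x\<in>topspace X. F' x = F x))))"
proof (intro conjI allI impI)
  show "\<exists>(Y :: ('g set \<times> 'a) topology) act \<pi>Y \<phi>Y.
          split_space G T Y act A \<pi>Y \<phi>Y \<and> isotropy_groupoid G act A \<phi>Y = I \<and> loc_compact Y"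
    by (rule split_space_with_isotropy_groupoid_exists[OF assms])
next
  fix X :: "'x topology" and act \<pi> \<phi> and X' :: "'y topology" and act' \<pi>' \<phi>'
  assume "split_space G T X act A \<pi> \<phi> \<and> isotropy_groupoid G act A \<phi> = I \<and> loc_compact X \<and>
    split_space G T X' act' A \<pi>' \<phi>' \<and> isotropy_groupoid G act' A \<phi>' = I \<and> loc_compact X'"
  then show "\<exists>F. equivariant_homeo G X act X' act' F \<and> (\<forall>a\<in>topspace A. \<phi>' a = F (\<phi> a)) \<and>
               (\<forall>F'. equivariant_homeo G X act X' act' F' \<and> (\<forall>a\<in>topspace A. \<phi>' a = F' (\<phi> a))
                     \<longrightarrow> (\<forall>x\<in>topspace X. F' x = F x))"
    by (elim conjE) (rule split_spaces_unique_equivariant_homeo[OF assms(1,2)]; simp)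
qed

end
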